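(* Let $p\in\mathbb{C}[z,w]$ have no zeros in $\mathbb{B}_2$ with $p(0,1)=0$, with local factorization $p(z,w)=a(z)\prod_{j=1}^n(1-h_j(z)w)$ on $\mathbb{D}(\epsilon)\times\mathbb{D}(1,\epsilon)$ as in the context. Let $s\in(-1,\infty)$ and $\beta$ with $b:=\beta-s-2>0$, and set $U_j=\Omega_j\times\mathbb{D}(1,\epsilon)$. Then there is $C>0$ (independent of $r\in(0,1)$ as $r\to1^-$) such that $$\int_{\mathbb{B}_2\cap U_j}\frac{(1-|z|^2-|w|^2)^s}{|1-rh_j(rz)w|^\beta}\,dA(z,w)\le C\int_{\Omega_j}\frac{dA(z)}{\big(1-r^2|h_j(rz)|^2(1-|z|^2)\big)^b}.$$
   Context: $\mathbb{B}_2=\{|z|^2+|w|^2<1\}$, $\mathbb{D}(\epsilon)=\{|z|<\epsilon\}$, $\mathbb{D}(1,\epsilon)=\{|z-1|<\epsilon\}$; $dA$ denotes normalized area (Lebesgue) measure. In the factorization, $a$ is non-vanishing holomorphic on $\mathbb{D}(\epsilon)$ and each $h_j$ is a branch of an algebraic function, a single-valued holomorphic function on a dense simply connected subdomain $\Omega_j$ of $\mathbb{D}(\epsilon)\setminus\{0\}$, of Puiseux form $h_j(z)=\Phi_j(z^{1/k_j})$ with $\Phi_j$ holomorphic near $0$. *)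

theory Defs
  imports "HOL-Analysis.Analysis"
begin

definition is_poly2 :: "(complex \<Rightarrow> complex \<Rightarrow> complex) \<Rightarrow> bool" where
  "is_poly2 p \<longleftrightarrow> (\<exists>N::nat. \<exists>c::nat \<Rightarrow> nat \<Rightarrow> complex.
      \<forall>z w. p z w = (\<Sum>i\<le>N. \<Sum>j\<le>N. c i j * z ^ i * w ^ j))"

definition ball2 :: "(complex \<times> complex) set" where
  "ball2 = {(z, w). (cmod z)\<^sup>2 + (cmod w)\<^sup>2 < 1}"

definition puiseux_on :: "complex set \<Rightarrow> (complex \<Rightarrow> complex) \<Rightarrow> bool" where
  "puiseux_on \<Omega> h \<longleftrightarrow> (\<exists>k::nat. k \<ge> 1 \<and> (\<exists>\<rho> \<Phi> \<delta>. \<delta> > 0 \<and>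
      \<rho> holomorphic_on \<Omega> \<and> (\<forall>z\<in>\<Omega>. \<rho> z ^ k = z) \<and>
      \<Phi> holomorphic_on ball 0 \<delta> \<and> \<rho> ` \<Omega> \<subseteq> ball 0 \<delta> \<and>
      (\<forall>z\<in>\<Omega>. h z = \<Phi> (\<rho> z))))"

end

theory Submission
  imports Defs "HOL-Complex_Analysis.Complex_Analysis"
begin

(*
  Each slice {w. (z, w) in ball2} is the disc of radius rho = sqrt (1 - |z|^2), and on it the
  integrand is (rho^2 - |w|^2)^s / |1 - c w|^beta with c = r h_j(r z).  By Tonelli the estimate
  therefore follows from the one-variable bound of Forelli-Rudin type

    int_{|u| < rho} (rho^2 - |u|^2)^s / |1 - c u|^beta  <=  K / (1 - |c|^2 rho^2)^(beta - s - 2),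

  valid whenever |c| rho < 1.  That condition holds because the local factorization continues
  analytically in w, so 1 / h_j(z) is a zero of p(z, _) and hence lies outside the ball:
  |h_j(z)|^2 (1 - |z|^2) <= 1 on the dense set where all branches are defined, by continuity on
  all of Omega_j, and strictly after scaling by r < 1.

  The one-variable bound comes from the layer cake formula for |1 - c u|^(-beta): the sublevel set
  {|1 - c u| <= tau} is a disc of radius about tau / |c| centred at 1 / c, outside the disc of
  radius rho, and the weight has mass O(rho^s l^(s+2)) on a disc of radius l centred outside that
  disc.  For s < 0 this mass bound needs a second layer cake, over the distance to the boundary
  circle, together with the area bound O(l tau) for a disc of radius l meeting an annulus of width
  tau, which is proved by slicing.
*)

lemma borel_measurable_Complex_pair [measurable]:
  "(\<lambda>z. Complex (fst z) (snd z)) \<in> borel_measurable (borel :: (real \<times> real) measure)"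
  by (intro borel_measurable_continuous_onI continuous_intros)

lemma lborel_complex_eq_distr:
  "lborel = distr (lborel :: (real \<times> real) measure) borel (\<lambda>z. Complex (fst z) (snd z))"
proof (rule lborel_eqI)
  fix l u :: complex
  assume le: "\<And>b. b \<in> Basis \<Longrightarrow> l \<bullet> b \<le> u \<bullet> b"
  have "Re l \<le> Re u" "Im l \<le> Im u"
    using le[of 1] le[of \<i>] by (auto simp: Basis_complex_def)
  moreover have "(\<lambda>z. Complex (fst z) (snd z)) -` box l u = {Re l<..<Re u} \<times> {Im l<..<Im u}"
    by (auto simp: in_box_complex_iff)
  ultimately show "emeasure (distr lborel borel (\<lambda>z. Complex (fst z) (snd z))) (box l u) =
      (\<Prod>b\<in>Basis. (u - l) \<bullet> b)"
    by (subst emeasure_distr, simp_all, subst lborel_prod[symmetric])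
      (simp add: lborel.emeasure_pair_measure_Times Basis_complex_def ennreal_mult)
qed simp

lemma nn_integral_lborel_complex:
  assumes "f \<in> borel_measurable borel"
  shows "(\<integral>\<^sup>+u. f u \<partial>lborel) = (\<integral>\<^sup>+x. \<integral>\<^sup>+y. f (Complex x y) \<partial>lborel \<partial>lborel)"
proof -
  have "(\<integral>\<^sup>+u. f u \<partial>lborel) = (\<integral>\<^sup>+z. f (Complex (fst z) (snd z)) \<partial>(lborel \<Otimes>\<^sub>M lborel))"
    using assms by (subst lborel_complex_eq_distr) (simp add: nn_integral_distr lborel_prod)
  also have "\<dots> = (\<integral>\<^sup>+x. \<integral>\<^sup>+y. f (Complex x y) \<partial>lborel \<partial>lborel)"
    using assms by (subst lborel.nn_integral_fst[symmetric]) (auto simp: lborel_prod)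
  finally show ?thesis .
qed

lemma nn_integral_lborel_complex_swap:
  assumes "f \<in> borel_measurable borel"
  shows "(\<integral>\<^sup>+u. f u \<partial>lborel) = (\<integral>\<^sup>+y. \<integral>\<^sup>+x. f (Complex x y) \<partial>lborel \<partial>lborel)"
  using assms unfolding nn_integral_lborel_complex[OF assms]
  by (intro pair_sigma_finite.Fubini'[symmetric])
    (auto simp: pair_sigma_finite_def lborel.sigma_finite_measure_axioms lborel_prod case_prod_unfold)

lemma emeasure_lborel_swap_Re_Im:
  assumes "S \<in> sets borel"
  shows "emeasure lborel ((\<lambda>u. Complex (Im u) (Re u)) -` S) = emeasure lborel S"
proof -
  have swap: "(\<lambda>u. Complex (Im u) (Re u)) \<in> borel_measurable borel"
    by (intro borel_measurable_continuous_onI continuous_intros)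
  have "emeasure lborel ((\<lambda>u. Complex (Im u) (Re u)) -` S) =
      (\<integral>\<^sup>+u. indicator ((\<lambda>u. Complex (Im u) (Re u)) -` S) u \<partial>lborel)"
    using measurable_sets_borel[OF swap assms] by (intro nn_integral_indicator[symmetric]) simp
  also have "\<dots> = (\<integral>\<^sup>+u. indicator S (Complex (Im u) (Re u)) \<partial>lborel)"
    by (simp add: indicator_def)
  also have "\<dots> = (\<integral>\<^sup>+y. \<integral>\<^sup>+x. indicator S (Complex y x) \<partial>lborel \<partial>lborel)"
    using measurable_compose[OF swap borel_measurable_indicator[OF assms]]
    by (subst nn_integral_lborel_complex_swap) simp_all
  also have "\<dots> = emeasure lborel S"
    using assms by (simp add: nn_integral_lborel_complex[symmetric])
  finally show ?thesis .
qed

lemma emeasure_lborel_ball_complex_le: "emeasure lborel (ball (c :: complex) r) \<le> ennreal (4 * r\<^sup>2)"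
proof (cases "r \<ge> 0")
  case True
  then show ?thesis
    using pi_less_4 by (auto simp: emeasure_ball eval_unit_ball_vol intro!: ennreal_leI mult_right_mono)
qed (simp add: ball_empty)

lemma sets_borel_ball [measurable]: "ball (c :: 'a :: metric_space) r \<in> sets borel"
  by simp

lemma emeasure_abs_ge_square_between_le:
  fixes m p q :: real
  assumes m: "0 < m"
  shows "emeasure lborel {x. m \<le> \<bar>x\<bar> \<and> p \<le> x\<^sup>2 \<and> x\<^sup>2 \<le> q} \<le> ennreal ((q - p) / m)"
proof -
  define a where "a = sqrt (max p (m\<^sup>2))"
  have a_sq: "a\<^sup>2 = max p (m\<^sup>2)" and "m \<le> a"
    using m by (auto simp: a_def real_le_rsqrt le_max_iff_disj)
  have "{x. m \<le> \<bar>x\<bar> \<and> p \<le> x\<^sup>2 \<and> x\<^sup>2 \<le> q} \<subseteq> {-sqrt q..-a} \<union> {a..sqrt q}"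
  proof
    fix x assume x: "x \<in> {x. m \<le> \<bar>x\<bar> \<and> p \<le> x\<^sup>2 \<and> x\<^sup>2 \<le> q}"
    then have "m\<^sup>2 \<le> x\<^sup>2"
      using m power_mono[of m "\<bar>x\<bar>" 2] by simp
    then have "a \<le> \<bar>x\<bar>"
      using x by (auto simp: a_def real_sqrt_le_iff' intro: real_le_lsqrt)
    moreover have "\<bar>x\<bar> \<le> sqrt q"
      using x by (simp add: real_le_rsqrt)
    ultimately show "x \<in> {-sqrt q..-a} \<union> {a..sqrt q}"
      by auto
  qed
  then have "emeasure lborel {x. m \<le> \<bar>x\<bar> \<and> p \<le> x\<^sup>2 \<and> x\<^sup>2 \<le> q} \<le>
      emeasure lborel {-sqrt q..-a} + emeasure lborel {a..sqrt q}"
    by (intro order_trans[OF emeasure_mono emeasure_subadditive]) auto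
  also have "\<dots> = ennreal (2 * (if a \<le> sqrt q then sqrt q - a else 0))"
    by (simp add: emeasure_lborel_Icc_eq ennreal_plus[symmetric] del: ennreal_plus)
  also have "\<dots> \<le> ennreal ((q - p) / m)"
  proof (cases "a \<le> sqrt q")
    case True
    then have "0 < sqrt q"
      using m \<open>m \<le> a\<close> by linarith
    then have "0 \<le> q"
      by simp
    then have "(sqrt q - a) * (sqrt q + a) \<le> q - p"
      using a_sq by (simp add: algebra_simps power2_eq_square[symmetric])
    moreover have "(sqrt q - a) * (2 * m) \<le> (sqrt q - a) * (sqrt q + a)"
      using True \<open>m \<le> a\<close> by (intro mult_left_mono) auto
    ultimately show ?thesis
      using True m by (intro ennreal_leI) (simp add: field_simps)
  qed simp
  finally show ?thesis .
qed

lemma emeasure_strip_annulus_le: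
  assumes S: "S \<in> sets borel" and m: "0 < m" and "p \<le> q" "0 \<le> l"
    and sub: "S \<subseteq> {u. m \<le> \<bar>Re u\<bar> \<and> p \<le> (cmod u)\<^sup>2 \<and> (cmod u)\<^sup>2 \<le> q \<and> \<bar>Im u - y0\<bar> < l}"
  shows "emeasure lborel S \<le> ennreal (2 * l * (q - p) / m)"
proof -
  have row: "emeasure lborel {x. Complex x y \<in> S} \<le> indicator {y0 - l<..<y0 + l} y * ennreal ((q - p) / m)"
    for y
  proof (cases "\<bar>y - y0\<bar> < l")
    case True
    have "{x. Complex x y \<in> S} \<subseteq> {x. m \<le> \<bar>x\<bar> \<and> p - y\<^sup>2 \<le> x\<^sup>2 \<and> x\<^sup>2 \<le> q - y\<^sup>2}"
      using sub by (auto simp: cmod_power2)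
    then have "emeasure lborel {x. Complex x y \<in> S} \<le> ennreal ((q - y\<^sup>2 - (p - y\<^sup>2)) / m)"
      by (rule order_trans[OF emeasure_mono emeasure_abs_ge_square_between_le[OF m]]) simp
    then show ?thesis
      using True by (simp add: abs_less_iff)
  next
    case False
    then have "{x. Complex x y \<in> S} = {}"
      using sub by auto
    then show ?thesis
      by simp
  qed
  have "emeasure lborel S = (\<integral>\<^sup>+y. \<integral>\<^sup>+x. indicator S (Complex x y) \<partial>lborel \<partial>lborel)"
    using S by (simp add: nn_integral_lborel_complex_swap[symmetric])
  also have "\<dots> = (\<integral>\<^sup>+y. emeasure lborel {x. Complex x y \<in> S} \<partial>lborel)"
  proof (rule nn_integral_cong)
    fix y
    have "(\<lambda>x. Complex x y) \<in> borel_measurable borel"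
      by (intro borel_measurable_continuous_onI continuous_intros)
    from measurable_sets_borel[OF this S]
    have "{x. Complex x y \<in> S} \<in> sets lborel"
      by (simp add: vimage_def)
    moreover have "(\<lambda>x. indicator S (Complex x y)) = (indicator {x. Complex x y \<in> S} :: real \<Rightarrow> ennreal)"
      by (auto simp: indicator_def)
    ultimately show "(\<integral>\<^sup>+x. indicator S (Complex x y) \<partial>lborel) = emeasure lborel {x. Complex x y \<in> S}"
      by simp
  qed
  also have "\<dots> \<le> (\<integral>\<^sup>+y. indicator {y0 - l<..<y0 + l} y * ennreal ((q - p) / m) \<partial>lborel)"
    by (intro nn_integral_mono row)
  also have "\<dots> = ennreal ((q - p) / m) * emeasure lborel {y0 - l<..<y0 + l}"
    by (simp add: nn_integral_cmult_indicator mult.commute)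
  also have "\<dots> = ennreal (2 * l * (q - p) / m)"
    using assms by (simp add: ennreal_mult[symmetric] field_simps)
  finally show ?thesis .
qed

lemma emeasure_disc_annulus_Re_le:
  fixes \<zeta> :: complex
  assumes "0 < \<rho>" "0 \<le> \<tau>" "\<tau> \<le> \<rho>" "0 \<le> l"
  shows "emeasure lborel (ball 0 \<rho> \<inter> ball \<zeta> l \<inter> {u. \<rho> - \<tau> \<le> cmod u \<and> \<rho> / 4 \<le> \<bar>Re u\<bar>})
    \<le> ennreal (16 * l * \<tau>)"
proof -
  have "emeasure lborel (ball 0 \<rho> \<inter> ball \<zeta> l \<inter> {u. \<rho> - \<tau> \<le> cmod u \<and> \<rho> / 4 \<le> \<bar>Re u\<bar>})
      \<le> ennreal (2 * l * (\<rho>\<^sup>2 - (\<rho> - \<tau>)\<^sup>2) / (\<rho> / 4))"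
  proof (rule emeasure_strip_annulus_le)
    show "ball 0 \<rho> \<inter> ball \<zeta> l \<inter> {u. \<rho> - \<tau> \<le> cmod u \<and> \<rho> / 4 \<le> \<bar>Re u\<bar>} \<in> sets borel"
      by (intro sets.Int borel_open borel_closed open_ball closed_Collect_conj closed_Collect_le
          continuous_intros)
    show "ball 0 \<rho> \<inter> ball \<zeta> l \<inter> {u. \<rho> - \<tau> \<le> cmod u \<and> \<rho> / 4 \<le> \<bar>Re u\<bar>} \<subseteq>
        {u. \<rho> / 4 \<le> \<bar>Re u\<bar> \<and> (\<rho> - \<tau>)\<^sup>2 \<le> (cmod u)\<^sup>2 \<and> (cmod u)\<^sup>2 \<le> \<rho>\<^sup>2 \<and> \<bar>Im u - Im \<zeta>\<bar> < l}"
    proof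
      fix u assume u: "u \<in> ball 0 \<rho> \<inter> ball \<zeta> l \<inter> {u. \<rho> - \<tau> \<le> cmod u \<and> \<rho> / 4 \<le> \<bar>Re u\<bar>}"
      have "\<bar>Im u - Im \<zeta>\<bar> \<le> dist \<zeta> u"
        using abs_Im_le_cmod[of "u - \<zeta>"] by (simp add: dist_norm norm_minus_commute)
      then show "u \<in> {u. \<rho> / 4 \<le> \<bar>Re u\<bar> \<and> (\<rho> - \<tau>)\<^sup>2 \<le> (cmod u)\<^sup>2 \<and> (cmod u)\<^sup>2 \<le> \<rho>\<^sup>2 \<and> \<bar>Im u - Im \<zeta>\<bar> < l}"
        using u assms by (auto intro!: power_mono)
    qed
  qed (use assms in \<open>auto intro: power_mono\<close>)
  also have "\<dots> \<le> ennreal (16 * l * \<tau>)"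
    using assms by (intro ennreal_leI) (simp add: field_simps power2_eq_square mult_left_mono)
  finally show ?thesis .
qed

lemma emeasure_disc_annulus_Im_le:
  fixes \<zeta> :: complex
  assumes "0 < \<rho>" "0 \<le> \<tau>" "\<tau> \<le> \<rho>" "0 \<le> l"
  shows "emeasure lborel (ball 0 \<rho> \<inter> ball \<zeta> l \<inter> {u. \<rho> - \<tau> \<le> cmod u \<and> \<rho> / 4 \<le> \<bar>Im u\<bar>})
    \<le> ennreal (16 * l * \<tau>)"
proof -
  define \<sigma> where "\<sigma> = (\<lambda>u. Complex (Im u) (Re u))"
  let ?S = "ball 0 \<rho> \<inter> ball (\<sigma> \<zeta>) l \<inter> {u. \<rho> - \<tau> \<le> cmod u \<and> \<rho> / 4 \<le> \<bar>Re u\<bar>}"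
  have "cmod (\<sigma> u) = cmod u" "dist (\<sigma> u) (\<sigma> \<zeta>) = dist u \<zeta>" for u
    by (simp_all add: \<sigma>_def cmod_def dist_norm add.commute)
  then have "ball 0 \<rho> \<inter> ball \<zeta> l \<inter> {u. \<rho> - \<tau> \<le> cmod u \<and> \<rho> / 4 \<le> \<bar>Im u\<bar>} = \<sigma> -` ?S"
    by (auto simp: \<sigma>_def dist_commute)
  also have "emeasure lborel (\<sigma> -` ?S) = emeasure lborel ?S"
    unfolding \<sigma>_def
    by (intro emeasure_lborel_swap_Re_Im sets.Int borel_open borel_closed open_ball
        closed_Collect_conj closed_Collect_le continuous_intros)
  also have "\<dots> \<le> ennreal (16 * l * \<tau>)"
    by (rule emeasure_disc_annulus_Re_le[OF assms])
  finally show ?thesis .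
qed

lemma emeasure_disc_annulus_le:
  fixes \<zeta> :: complex
  assumes "0 < \<rho>" "0 < \<tau>" "0 \<le> l"
  shows "emeasure lborel (ball 0 \<rho> \<inter> ball \<zeta> l \<inter> {u. \<rho> - \<tau> \<le> cmod u}) \<le> ennreal (32 * l * \<tau>)"
proof (cases "\<tau> \<le> \<rho> / 2")
  case True
  let ?A = "\<lambda>P. ball 0 \<rho> \<inter> ball \<zeta> l \<inter> {u. \<rho> - \<tau> \<le> cmod u \<and> \<rho> / 4 \<le> \<bar>P u\<bar>}"
  have "ball 0 \<rho> \<inter> ball \<zeta> l \<inter> {u. \<rho> - \<tau> \<le> cmod u} \<subseteq> ?A Re \<union> ?A Im"
  proof
    fix u assume u: "u \<in> ball 0 \<rho> \<inter> ball \<zeta> l \<inter> {u. \<rho> - \<tau> \<le> cmod u}"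
    then have "\<rho> / 2 \<le> \<bar>Re u\<bar> + \<bar>Im u\<bar>"
      using True cmod_le[of u] by auto
    then show "u \<in> ?A Re \<union> ?A Im"
      using u by auto
  qed
  moreover have "?A Re \<in> sets borel" "?A Im \<in> sets borel"
    by (intro sets.Int borel_open borel_closed open_ball closed_Collect_conj closed_Collect_le
        continuous_intros)+
  ultimately have "emeasure lborel (ball 0 \<rho> \<inter> ball \<zeta> l \<inter> {u. \<rho> - \<tau> \<le> cmod u})
      \<le> emeasure lborel (?A Re) + emeasure lborel (?A Im)"
    by (intro order_trans[OF emeasure_mono emeasure_subadditive]) auto
  also have "\<dots> \<le> ennreal (16 * l * \<tau>) + ennreal (16 * l * \<tau>)"
    using assms True by (intro add_mono emeasure_disc_annulus_Re_le emeasure_disc_annulus_Im_le) auto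
  finally show ?thesis
    using assms by (simp add: ennreal_plus[symmetric] mult_ac del: ennreal_plus)
next
  case False
  let ?A = "ball 0 \<rho> \<inter> ball \<zeta> l \<inter> {u. \<rho> - \<tau> \<le> cmod u}"
  have "emeasure lborel ?A \<le> ennreal (4 * \<rho> * l)"
  proof (cases "\<rho> \<le> l")
    case True
    have "emeasure lborel ?A \<le> ennreal (4 * \<rho>\<^sup>2)"
      by (rule order_trans[OF emeasure_mono emeasure_lborel_ball_complex_le]) auto
    also have "\<dots> \<le> ennreal (4 * \<rho> * l)"
      using True assms by (intro ennreal_leI) (simp add: power2_eq_square)
    finally show ?thesis .
  next
    case False
    have "emeasure lborel ?A \<le> ennreal (4 * l\<^sup>2)"
      by (rule order_trans[OF emeasure_mono emeasure_lborel_ball_complex_le]) auto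
    also have "\<dots> \<le> ennreal (4 * \<rho> * l)"
      using False assms by (intro ennreal_leI) (simp add: power2_eq_square mult_right_mono)
    finally show ?thesis .
  qed
  also have "\<dots> \<le> ennreal (32 * l * \<tau>)"
    using assms False mult_right_mono[of \<rho> "8 * \<tau>" l] by (intro ennreal_leI) simp
  finally show ?thesis .
qed

lemma nn_integral_powr_Ici:
  fixes x e :: real
  assumes "0 < x" "e < -1"
  shows "(\<integral>\<^sup>+\<tau>\<in>{x..}. ennreal (\<tau> powr e) \<partial>lborel) = ennreal (x powr (e + 1) / - (e + 1))"
proof -
  have "((\<lambda>\<tau>. \<tau> powr e) has_integral x powr (e + 1) / - (e + 1)) {x..}"
    using has_integral_powr_to_inf[OF assms(2,1)]
    by (simp only: minus_divide_left[symmetric] minus_divide_right)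
  then show ?thesis
    by (intro nn_integral_has_integral_lebesgue') auto
qed

lemma nn_integral_powr_Icc0:
  fixes l e :: real
  assumes "0 \<le> l" "-1 < e"
  shows "(\<integral>\<^sup>+\<tau>\<in>{0..l}. ennreal (\<tau> powr e) \<partial>lborel) = ennreal (l powr (e + 1) / (e + 1))"
  using has_integral_powr_from_0[OF assms(2,1)] by (intro nn_integral_has_integral_lebesgue') auto

lemma powr_neg_eq_nn_integral:
  fixes x s :: real
  assumes "0 < x" "s < 0"
  shows "ennreal (x powr s) = (\<integral>\<^sup>+\<tau>\<in>{x..}. ennreal (- s * \<tau> powr (s - 1)) \<partial>lborel)"
proof -
  have "(\<integral>\<^sup>+\<tau>\<in>{x..}. ennreal (- s * \<tau> powr (s - 1)) \<partial>lborel) =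
      (\<integral>\<^sup>+\<tau>\<in>{x..}. ennreal (- s) * ennreal (\<tau> powr (s - 1)) \<partial>lborel)"
    using assms by (simp add: ennreal_mult'[symmetric])
  also have "\<dots> = ennreal (- s) * (\<integral>\<^sup>+\<tau>\<in>{x..}. ennreal (\<tau> powr (s - 1)) \<partial>lborel)"
    by (simp add: mult.assoc nn_integral_cmult)
  also have "\<dots> = ennreal (x powr s)"
    using assms by (simp add: nn_integral_powr_Ici ennreal_mult'[symmetric])
  finally show ?thesis ..
qed

lemma nn_integral_layer_cake_powr_neg:
  fixes f :: "'a \<Rightarrow> real" and W :: "'a \<Rightarrow> ennreal"
  assumes M: "sigma_finite_measure M"
    and [measurable]: "E \<in> sets M" "f \<in> borel_measurable M" "W \<in> borel_measurable M"
    and s: "s < 0" and pos: "\<And>x. x \<in> E \<Longrightarrow> 0 < f x"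
  shows "(\<integral>\<^sup>+x\<in>E. W x * ennreal (f x powr s) \<partial>M) =
    (\<integral>\<^sup>+\<tau>. ennreal (- s * \<tau> powr (s - 1)) * (\<integral>\<^sup>+x\<in>E \<inter> {x. f x \<le> \<tau>}. W x \<partial>M) \<partial>lborel)"
proof -
  define G where "G x \<tau> = W x * indicator E x * (ennreal (- s * \<tau> powr (s - 1)) * of_bool (f x \<le> \<tau>))"
    for x \<tau>
  have "(\<lambda>(x, \<tau>). G x \<tau>) \<in> borel_measurable (M \<Otimes>\<^sub>M lborel)"
    unfolding G_def by measurable
  have "(\<integral>\<^sup>+x\<in>E. W x * ennreal (f x powr s) \<partial>M) = (\<integral>\<^sup>+x. \<integral>\<^sup>+\<tau>. G x \<tau> \<partial>lborel \<partial>M)"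
  proof (intro nn_integral_cong)
    fix x
    show "W x * ennreal (f x powr s) * indicator E x = (\<integral>\<^sup>+\<tau>. G x \<tau> \<partial>lborel)"
    proof (cases "x \<in> E")
      case True
      then have "ennreal (f x powr s) = (\<integral>\<^sup>+\<tau>. ennreal (- s * \<tau> powr (s - 1)) * of_bool (f x \<le> \<tau>) \<partial>lborel)"
        using pos s by (subst powr_neg_eq_nn_integral) (auto intro!: nn_integral_cong simp: indicator_def)
      then show ?thesis
        using True by (simp add: G_def nn_integral_cmult)
    qed (simp add: G_def)
  qed
  also have "\<dots> = (\<integral>\<^sup>+\<tau>. \<integral>\<^sup>+x. G x \<tau> \<partial>M \<partial>lborel)"
    using M \<open>(\<lambda>(x, \<tau>). G x \<tau>) \<in> borel_measurable (M \<Otimes>\<^sub>M lborel)\<close>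
    by (intro pair_sigma_finite.Fubini'[symmetric]) (simp add: pair_sigma_finite_def lborel.sigma_finite_measure_axioms)
  also have "\<dots> = (\<integral>\<^sup>+\<tau>. ennreal (- s * \<tau> powr (s - 1)) * (\<integral>\<^sup>+x\<in>E \<inter> {x. f x \<le> \<tau>}. W x \<partial>M) \<partial>lborel)"
    by (intro nn_integral_cong, subst nn_integral_cmult[symmetric])
      (auto intro!: nn_integral_cong simp: G_def indicator_def mult_ac)
  finally show ?thesis .
qed

lemma emeasure_disc_annulus_layer_le:
  fixes \<zeta> :: complex
  assumes s: "s < 0" and \<rho>: "0 < \<rho>" and l: "0 < l"
  shows "ennreal (- s * \<tau> powr (s - 1)) * emeasure lborel (ball 0 \<rho> \<inter> ball \<zeta> l \<inter> {u. \<rho> - \<tau> \<le> cmod u}) \<le>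
      ennreal (- s * 32 * l) * (ennreal (\<tau> powr s) * indicator {0..l} \<tau>) +
      ennreal (- s * 4 * l\<^sup>2) * (ennreal (\<tau> powr (s - 1)) * indicator {l..} \<tau>)"
proof -
  let ?A = "ball 0 \<rho> \<inter> ball \<zeta> l \<inter> {u. \<rho> - \<tau> \<le> cmod u}"
  consider "\<tau> \<le> 0" | "0 < \<tau>" "\<tau> \<le> l" | "l < \<tau>"
    by linarith
  then show ?thesis
  proof cases
    case 1
    then have "?A = {}"
      by auto
    then have "emeasure lborel ?A = 0"
      by simp
    then show ?thesis
      by simp
  next
    case 2
    have "ennreal (- s * \<tau> powr (s - 1)) * emeasure lborel ?A \<le> ennreal (- s * \<tau> powr (s - 1)) * ennreal (32 * l * \<tau>)"
      using 2 \<rho> l by (intro mult_left_mono emeasure_disc_annulus_le) auto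
    also have "\<dots> = ennreal (- s * \<tau> powr (s - 1) * (32 * l * \<tau>))"
      using 2 s l by (intro ennreal_mult[symmetric]) (auto simp: mult_nonpos_nonneg)
    also have "- s * \<tau> powr (s - 1) * (32 * l * \<tau>) = - s * 32 * l * (\<tau> powr (s - 1) * \<tau>)"
      by simp
    also have "\<tau> powr (s - 1) * \<tau> = \<tau> powr s"
      using 2 by (simp add: powr_diff)
    also have "ennreal (- s * 32 * l * \<tau> powr s) =
        ennreal (- s * 32 * l) * (ennreal (\<tau> powr s) * indicator {0..l} \<tau>)"
      using 2 s l by (subst ennreal_mult[of "- s * 32 * l"]) (auto simp: mult_nonpos_nonneg)
    finally show ?thesis
      by (simp add: add_increasing2)
  next
    case 3
    have "emeasure lborel ?A \<le> ennreal (4 * l\<^sup>2)"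
      by (rule order_trans[OF emeasure_mono emeasure_lborel_ball_complex_le]) auto
    then have "ennreal (- s * \<tau> powr (s - 1)) * emeasure lborel ?A \<le> ennreal (- s * \<tau> powr (s - 1)) * ennreal (4 * l\<^sup>2)"
      by (rule mult_left_mono) simp
    also have "\<dots> = ennreal (- s * 4 * l\<^sup>2 * \<tau> powr (s - 1))"
      using s by (subst ennreal_mult[symmetric]) (auto simp: mult_nonpos_nonneg mult_ac)
    also have "\<dots> = ennreal (- s * 4 * l\<^sup>2) * (ennreal (\<tau> powr (s - 1)) * indicator {l..} \<tau>)"
      using 3 s by (subst ennreal_mult[of "- s * 4 * l\<^sup>2"]) (auto simp: mult_nonpos_nonneg)
    finally show ?thesis
      using 3 by simp
  qed
qed

lemma nn_integral_dist_boundary_powr_le: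
  fixes \<zeta> :: complex
  assumes s: "-1 < s" "s < 0" and \<rho>: "0 < \<rho>" and l: "0 < l"
  shows "(\<integral>\<^sup>+u\<in>ball 0 \<rho> \<inter> ball \<zeta> l. ennreal ((\<rho> - cmod u) powr s) \<partial>lborel)
    \<le> ennreal ((32 * - s / (s + 1) + 4) * l powr (s + 2))"
proof -
  let ?E = "ball 0 \<rho> \<inter> ball \<zeta> l"
  define m where "m \<tau> = emeasure lborel (ball 0 \<rho> \<inter> ball \<zeta> l \<inter> {u. \<rho> - \<tau> \<le> cmod u})" for \<tau>
  have m_borel: "ball 0 \<rho> \<inter> ball \<zeta> l \<inter> {u. \<rho> - \<tau> \<le> cmod u} \<in> sets borel" for \<tau>
    by (intro sets.Int borel_open borel_closed open_ball closed_Collect_le continuous_intros)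
  have layer: "(\<integral>\<^sup>+u\<in>?E. ennreal ((\<rho> - cmod u) powr s) \<partial>lborel) =
      (\<integral>\<^sup>+\<tau>. ennreal (- s * \<tau> powr (s - 1)) * m \<tau> \<partial>lborel)"
  proof -
    have "?E \<inter> {u. \<rho> - cmod u \<le> \<tau>} = ball 0 \<rho> \<inter> ball \<zeta> l \<inter> {u. \<rho> - \<tau> \<le> cmod u}" for \<tau>
      by auto
    then show ?thesis
      using nn_integral_layer_cake_powr_neg[OF lborel.sigma_finite_measure_axioms,
          of ?E "\<lambda>u. \<rho> - cmod u" "\<lambda>_. 1" s] s m_borel
      by (simp add: m_def)
  qed
  have "(\<integral>\<^sup>+u\<in>?E. ennreal ((\<rho> - cmod u) powr s) \<partial>lborel) \<le>
      ennreal (- s * 32 * l) * (\<integral>\<^sup>+\<tau>\<in>{0..l}. ennreal (\<tau> powr s) \<partial>lborel) +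
      ennreal (- s * 4 * l\<^sup>2) * (\<integral>\<^sup>+\<tau>\<in>{l..}. ennreal (\<tau> powr (s - 1)) \<partial>lborel)"
    unfolding layer m_def
  proof (rule order_trans[OF nn_integral_mono[OF emeasure_disc_annulus_layer_le[OF s(2) \<rho> l]]])
    show "(\<integral>\<^sup>+\<tau>. ennreal (- s * 32 * l) * (ennreal (\<tau> powr s) * indicator {0..l} \<tau>) +
        ennreal (- s * 4 * l\<^sup>2) * (ennreal (\<tau> powr (s - 1)) * indicator {l..} \<tau>) \<partial>lborel) \<le>
      ennreal (- s * 32 * l) * (\<integral>\<^sup>+\<tau>\<in>{0..l}. ennreal (\<tau> powr s) \<partial>lborel) +
      ennreal (- s * 4 * l\<^sup>2) * (\<integral>\<^sup>+\<tau>\<in>{l..}. ennreal (\<tau> powr (s - 1)) \<partial>lborel)"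
      by (subst nn_integral_add, measurable, measurable, subst (1 2) nn_integral_cmult, measurable)
  qed
  also have "\<dots> = ennreal (- s * 32 * l) * ennreal (l powr (s + 1) / (s + 1)) +
      ennreal (- s * 4 * l\<^sup>2) * ennreal (l powr s / - s)"
    using s l by (simp add: nn_integral_powr_Icc0 nn_integral_powr_Ici)
  also have "\<dots> = ennreal (- s * 32 * l * (l powr (s + 1) / (s + 1)) + - s * 4 * l\<^sup>2 * (l powr s / - s))"
  proof -
    have sum_of_products: "ennreal a * ennreal b + ennreal c * ennreal d = ennreal (a * b + c * d)"
      if "0 \<le> a" "0 \<le> b" "0 \<le> c" "0 \<le> d" for a b c d :: real
      using that by (simp add: ennreal_plus ennreal_mult)
    show ?thesis
      using s l by (intro sum_of_products mult_nonneg_nonneg divide_nonneg_pos) auto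
  qed
  also have "- s * 32 * l * (l powr (s + 1) / (s + 1)) + - s * 4 * l\<^sup>2 * (l powr s / - s) =
      (32 * - s / (s + 1) + 4) * l powr (s + 2)"
  proof -
    have "l * l powr (s + 1) = l powr (s + 2)" "l\<^sup>2 * l powr s = l powr (s + 2)"
      using l by (simp_all add: powr_add power2_eq_square)
    then show ?thesis
      using s by (simp add: field_simps)
  qed
  finally show ?thesis .
qed

lemma nn_integral_disc_weight_le_neg:
  fixes \<zeta> :: complex
  assumes s: "-1 < s" "s < 0" and \<rho>: "0 < \<rho>" and l: "0 < l"
  shows "(\<integral>\<^sup>+u\<in>ball 0 \<rho> \<inter> ball \<zeta> l. ennreal ((\<rho>\<^sup>2 - (cmod u)\<^sup>2) powr s) \<partial>lborel)
    \<le> ennreal ((32 * - s / (s + 1) + 4) * \<rho> powr s * l powr (s + 2))"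
proof -
  have "(\<rho>\<^sup>2 - (cmod u)\<^sup>2) powr s \<le> \<rho> powr s * (\<rho> - cmod u) powr s" if "cmod u < \<rho>" for u
  proof -
    have "(\<rho>\<^sup>2 - (cmod u)\<^sup>2) powr s = (\<rho> - cmod u) powr s * (\<rho> + cmod u) powr s"
      using that by (simp add: power2_eq_square square_diff_square_factored powr_mult)
    also have "\<dots> \<le> (\<rho> - cmod u) powr s * \<rho> powr s"
      using \<rho> s by (intro mult_left_mono powr_mono2') auto
    finally show ?thesis
      by (simp add: mult.commute)
  qed
  then have "(\<integral>\<^sup>+u\<in>ball 0 \<rho> \<inter> ball \<zeta> l. ennreal ((\<rho>\<^sup>2 - (cmod u)\<^sup>2) powr s) \<partial>lborel)
      \<le> (\<integral>\<^sup>+u\<in>ball 0 \<rho> \<inter> ball \<zeta> l. ennreal (\<rho> powr s) * ennreal ((\<rho> - cmod u) powr s) \<partial>lborel)"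
    by (intro nn_integral_mono) (auto simp: ennreal_mult[symmetric] split: split_indicator intro!: ennreal_leI)
  also have "\<dots> = ennreal (\<rho> powr s) *
      (\<integral>\<^sup>+u\<in>ball 0 \<rho> \<inter> ball \<zeta> l. ennreal ((\<rho> - cmod u) powr s) \<partial>lborel)"
    by (simp only: mult.assoc, rule nn_integral_cmult) measurable
  also have "\<dots> \<le> ennreal (\<rho> powr s) * ennreal ((32 * - s / (s + 1) + 4) * l powr (s + 2))"
    using s \<rho> l by (intro mult_left_mono nn_integral_dist_boundary_powr_le) auto
  also have "\<dots> = ennreal (\<rho> powr s * ((32 * - s / (s + 1) + 4) * l powr (s + 2)))"
    by (rule ennreal_mult'[symmetric]) simp
  finally show ?thesis
    by (simp add: mult_ac)
qed

lemma nn_integral_disc_weight_le_nonneg: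
  fixes \<zeta> :: complex
  assumes s: "0 \<le> s" and \<rho>: "0 < \<rho>" and l: "0 < l" and \<zeta>: "\<rho> \<le> cmod \<zeta>"
  shows "(\<integral>\<^sup>+u\<in>ball 0 \<rho> \<inter> ball \<zeta> l. ennreal ((\<rho>\<^sup>2 - (cmod u)\<^sup>2) powr s) \<partial>lborel)
    \<le> ennreal (4 * 2 powr s * \<rho> powr s * l powr (s + 2))"
proof -
  have "(\<rho>\<^sup>2 - (cmod u)\<^sup>2) powr s \<le> 2 powr s * \<rho> powr s * l powr s"
    if "cmod u < \<rho>" "dist \<zeta> u < l" for u
  proof -
    have "\<rho> - cmod u \<le> dist \<zeta> u"
      using \<zeta> norm_triangle_ineq2[of \<zeta> u] by (simp add: dist_norm)
    then have "\<rho>\<^sup>2 - (cmod u)\<^sup>2 \<le> 2 * \<rho> * l"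
      using that \<rho> mult_mono[of "\<rho> + cmod u" "2 * \<rho>" "\<rho> - cmod u" l]
      by (simp add: power2_eq_square square_diff_square_factored)
    then have "(\<rho>\<^sup>2 - (cmod u)\<^sup>2) powr s \<le> (2 * \<rho> * l) powr s"
      using that s power_mono[of "cmod u" \<rho> 2] by (intro powr_mono2) auto
    then show ?thesis
      using \<rho> l by (simp add: powr_mult mult_ac)
  qed
  then have "(\<integral>\<^sup>+u\<in>ball 0 \<rho> \<inter> ball \<zeta> l. ennreal ((\<rho>\<^sup>2 - (cmod u)\<^sup>2) powr s) \<partial>lborel)
      \<le> (\<integral>\<^sup>+u\<in>ball \<zeta> l. ennreal (2 powr s * \<rho> powr s * l powr s) \<partial>lborel)"
    by (intro nn_integral_mono) (auto split: split_indicator intro!: ennreal_leI)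
  also have "\<dots> = ennreal (2 powr s * \<rho> powr s * l powr s) * emeasure lborel (ball \<zeta> l)"
    by (simp add: nn_integral_cmult_indicator)
  also have "\<dots> \<le> ennreal (2 powr s * \<rho> powr s * l powr s) * ennreal (4 * l\<^sup>2)"
    by (intro mult_left_mono emeasure_lborel_ball_complex_le) simp
  also have "\<dots> = ennreal (4 * 2 powr s * \<rho> powr s * l powr (s + 2))"
    using l by (simp add: ennreal_mult[symmetric] powr_add mult_ac)
  finally show ?thesis .
qed

lemma nn_integral_disc_weight_le:
  fixes s :: real
  assumes s: "-1 < s"
  obtains C where "0 < C"
    "\<And>\<rho> l \<zeta>. 0 < \<rho> \<Longrightarrow> 0 < l \<Longrightarrow> \<rho> \<le> cmod \<zeta> \<Longrightarrow>
      (\<integral>\<^sup>+u\<in>ball 0 \<rho> \<inter> ball \<zeta> l. ennreal ((\<rho>\<^sup>2 - (cmod u)\<^sup>2) powr s) \<partial>lborel)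
        \<le> ennreal (C * \<rho> powr s * l powr (s + 2))"
proof (cases "s < 0")
  case True
  have "0 < 32 * - s / (s + 1) + 4"
    using s True divide_nonneg_pos[of "32 * - s" "s + 1"] by linarith
  then show ?thesis
    using that nn_integral_disc_weight_le_neg[OF s True] by blast
next
  case False
  then show ?thesis
    using that[of "4 * 2 powr s"] nn_integral_disc_weight_le_nonneg[of s] by simp
qed

lemma nn_integral_disc_kernel_le_small:
  fixes c :: complex
  assumes weight: "\<And>l \<zeta>. 0 < l \<Longrightarrow> \<rho> \<le> cmod \<zeta> \<Longrightarrow>
      (\<integral>\<^sup>+u\<in>ball 0 \<rho> \<inter> ball \<zeta> l. ennreal ((\<rho>\<^sup>2 - (cmod u)\<^sup>2) powr s) \<partial>lborel)
        \<le> ennreal (C * \<rho> powr s * l powr (s + 2))"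
    and s: "-1 < s" and \<beta>: "0 \<le> \<beta>" and \<rho>: "0 < \<rho>" "\<rho> \<le> 1" and c: "cmod c * \<rho> \<le> 1 / 2"
    and C: "0 \<le> C"
  shows "(\<integral>\<^sup>+u\<in>ball 0 \<rho>. ennreal ((\<rho>\<^sup>2 - (cmod u)\<^sup>2) powr s / cmod (1 - c * u) powr \<beta>) \<partial>lborel)
    \<le> ennreal (2 powr \<beta> * C * 2 powr (s + 2))"
proof -
  have "(\<rho>\<^sup>2 - (cmod u)\<^sup>2) powr s / cmod (1 - c * u) powr \<beta> \<le> 2 powr \<beta> * (\<rho>\<^sup>2 - (cmod u)\<^sup>2) powr s"
    if "cmod u < \<rho>" for u
  proof -
    have "cmod (c * u) \<le> 1 / 2"
      using that c mult_left_mono[of "cmod u" \<rho> "cmod c"] by (simp add: norm_mult)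
    then have "1 / 2 \<le> cmod (1 - c * u)"
      using norm_triangle_ineq2[of 1 "c * u"] by simp
    then have "1 / 2 powr \<beta> \<le> cmod (1 - c * u) powr \<beta>" "0 < cmod (1 - c * u) powr \<beta>"
      using \<beta> powr_mono2[of \<beta> "1 / 2" "cmod (1 - c * u)"] by (auto simp: powr_divide)
    then have "1 \<le> 2 powr \<beta> * cmod (1 - c * u) powr \<beta>"
      by (simp add: divide_le_eq mult.commute)
    then show ?thesis
      using \<open>0 < cmod (1 - c * u) powr \<beta>\<close>
        mult_left_mono[of 1 "2 powr \<beta> * cmod (1 - c * u) powr \<beta>" "(\<rho>\<^sup>2 - (cmod u)\<^sup>2) powr s"]
      by (simp add: pos_divide_le_eq mult_ac)
  qed
  moreover have "ball 0 \<rho> \<inter> ball (of_real \<rho>) (2 * \<rho>) = ball (0 :: complex) \<rho>"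
  proof -
    have "dist (of_real \<rho>) u < 2 * \<rho>" if "cmod u < \<rho>" for u :: complex
      using that \<rho> norm_triangle_ineq4[of "of_real \<rho>" u] by (simp add: dist_norm)
    then show ?thesis
      by auto
  qed
  ultimately have "(\<integral>\<^sup>+u\<in>ball 0 \<rho>. ennreal ((\<rho>\<^sup>2 - (cmod u)\<^sup>2) powr s / cmod (1 - c * u) powr \<beta>) \<partial>lborel)
      \<le> (\<integral>\<^sup>+u\<in>ball 0 \<rho> \<inter> ball (of_real \<rho>) (2 * \<rho>). ennreal (2 powr \<beta>) *
          ennreal ((\<rho>\<^sup>2 - (cmod u)\<^sup>2) powr s) \<partial>lborel)"
    by (intro nn_integral_mono) (auto simp: ennreal_mult[symmetric] split: split_indicator intro!: ennreal_leI)
  also have "\<dots> = ennreal (2 powr \<beta>) *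
      (\<integral>\<^sup>+u\<in>ball 0 \<rho> \<inter> ball (of_real \<rho>) (2 * \<rho>). ennreal ((\<rho>\<^sup>2 - (cmod u)\<^sup>2) powr s) \<partial>lborel)"
    by (simp only: mult.assoc, rule nn_integral_cmult) measurable
  also have "\<dots> \<le> ennreal (2 powr \<beta>) * ennreal (C * \<rho> powr s * (2 * \<rho>) powr (s + 2))"
    using \<rho> by (intro mult_left_mono weight) auto
  also have "\<dots> \<le> ennreal (2 powr \<beta>) * ennreal (C * 2 powr (s + 2))"
  proof (intro mult_left_mono ennreal_leI)
    have "\<rho> powr s * (2 * \<rho>) powr (s + 2) = 2 powr (s + 2) * \<rho> powr (2 * s + 2)"
      using \<rho> by (simp add: powr_mult powr_add[symmetric])
    also have "\<dots> \<le> 2 powr (s + 2)"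
      using \<rho> s by (simp add: powr_le1)
    finally show "C * \<rho> powr s * (2 * \<rho>) powr (s + 2) \<le> C * 2 powr (s + 2)"
      using C by (simp add: mult.assoc mult_left_mono)
  qed simp
  also have "\<dots> = ennreal (2 powr \<beta> * C * 2 powr (s + 2))"
    by (simp add: ennreal_mult'[symmetric] mult.assoc)
  finally show ?thesis .
qed

lemma inverse_one_minus_powr_le:
  fixes x b :: real
  assumes "0 \<le> x" "x < 1" "0 < b"
  shows "1 / (1 - x) powr b \<le> 2 powr b / (1 - x\<^sup>2) powr b"
proof -
  have factor: "1 - x\<^sup>2 = (1 - x) * (1 + x)"
    by (simp add: power2_eq_square algebra_simps)
  then have "0 < 1 - x\<^sup>2" "1 - x\<^sup>2 \<le> 2 * (1 - x)"
    using assms mult_left_mono[of "1 + x" 2 "1 - x"] by (auto simp: mult.commute)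
  then have "(1 - x\<^sup>2) powr b \<le> 2 powr b * (1 - x) powr b" "0 < (1 - x\<^sup>2) powr b"
    using assms powr_mult[of 2 "1 - x" b] powr_mono2[of b "1 - x\<^sup>2" "2 * (1 - x)"] by auto
  then have "2 powr b / (2 powr b * (1 - x) powr b) \<le> 2 powr b / (1 - x\<^sup>2) powr b"
    using assms by (intro divide_left_mono mult_pos_pos) auto
  then show ?thesis
    by simp
qed

lemma nn_integral_disc_sublevel_le:
  fixes c :: complex
  assumes weight: "\<And>l \<zeta>. 0 < l \<Longrightarrow> \<rho> \<le> cmod \<zeta> \<Longrightarrow>
      (\<integral>\<^sup>+u\<in>ball 0 \<rho> \<inter> ball \<zeta> l. ennreal ((\<rho>\<^sup>2 - (cmod u)\<^sup>2) powr s) \<partial>lborel)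
        \<le> ennreal (C * \<rho> powr s * l powr (s + 2))"
    and s: "-1 < s" and \<rho>: "0 < \<rho>" "\<rho> \<le> 1"
    and c: "1 / 2 \<le> cmod c * \<rho>" "cmod c * \<rho> < 1" and C: "0 \<le> C"
  shows "(\<integral>\<^sup>+u\<in>ball 0 \<rho> \<inter> {u. cmod (1 - c * u) \<le> \<tau>}. ennreal ((\<rho>\<^sup>2 - (cmod u)\<^sup>2) powr s) \<partial>lborel)
    \<le> ennreal (C * 4 powr (s + 2) * \<tau> powr (s + 2)) * indicator {1 - cmod c * \<rho>..} \<tau>"
proof (cases "1 - cmod c * \<rho> \<le> \<tau>")
  case True
  define a where "a = cmod c"
  have a: "0 < a" and \<tau>: "0 < \<tau>"
    using c \<rho> True by (auto simp: a_def zero_less_mult_iff)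
  have "ball 0 \<rho> \<inter> {u. cmod (1 - c * u) \<le> \<tau>} \<subseteq> ball 0 \<rho> \<inter> ball (1 / c) (2 * \<tau> / a)"
  proof safe
    fix u assume "cmod (1 - c * u) \<le> \<tau>"
    moreover have "1 / c - u = (1 - c * u) / c"
      using a by (simp add: a_def field_simps)
    ultimately show "u \<in> ball (1 / c) (2 * \<tau> / a)"
      using a \<tau> by (simp add: dist_norm norm_divide a_def divide_strict_right_mono)
  qed
  then have "(\<integral>\<^sup>+u\<in>ball 0 \<rho> \<inter> {u. cmod (1 - c * u) \<le> \<tau>}. ennreal ((\<rho>\<^sup>2 - (cmod u)\<^sup>2) powr s) \<partial>lborel)
      \<le> (\<integral>\<^sup>+u\<in>ball 0 \<rho> \<inter> ball (1 / c) (2 * \<tau> / a). ennreal ((\<rho>\<^sup>2 - (cmod u)\<^sup>2) powr s) \<partial>lborel)"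
    by (intro nn_integral_mono) (auto split: split_indicator)
  also have "\<dots> \<le> ennreal (C * \<rho> powr s * (2 * \<tau> / a) powr (s + 2))"
    using a \<tau> c by (intro weight) (auto simp: a_def norm_divide field_simps)
  also have "\<dots> \<le> ennreal (C * 4 powr (s + 2) * \<tau> powr (s + 2))"
  proof (intro ennreal_leI mult_left_mono)
    have "(2 * \<tau> / a) powr (s + 2) \<le> (4 * \<rho> * \<tau>) powr (s + 2)"
      using a \<tau> c s by (intro powr_mono2) (auto simp: a_def field_simps)
    then have "\<rho> powr s * (2 * \<tau> / a) powr (s + 2) \<le>
        \<rho> powr s * \<rho> powr (s + 2) * (4 powr (s + 2) * \<tau> powr (s + 2))"
      using \<rho> \<tau> by (simp add: powr_mult mult_left_mono mult_ac)
    also have "\<rho> powr s * \<rho> powr (s + 2) = \<rho> powr (2 * s + 2)"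
      by (simp add: powr_add[symmetric])
    also have "\<rho> powr (2 * s + 2) * (4 powr (s + 2) * \<tau> powr (s + 2)) \<le> 4 powr (s + 2) * \<tau> powr (s + 2)"
      using \<rho> s by (intro mult_left_le_one_le) (auto intro: powr_le1)
    finally show "C * \<rho> powr s * (2 * \<tau> / a) powr (s + 2) \<le> C * 4 powr (s + 2) * \<tau> powr (s + 2)"
      using C by (simp add: mult.assoc mult_left_mono)
  qed
  finally show ?thesis
    using True by simp
next
  case False
  have "\<tau> < cmod (1 - c * u)" if "cmod u < \<rho>" for u
  proof -
    have "cmod c * cmod u \<le> cmod c * \<rho>"
      using that by (simp add: mult_left_mono)
    then show ?thesis
      using False norm_triangle_ineq2[of 1 "c * u"] by (simp add: norm_mult)
  qed
  then have "ball 0 \<rho> \<inter> {u. cmod (1 - c * u) \<le> \<tau>} = {}"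
    by force
  then show ?thesis
    by simp
qed

lemma nn_integral_disc_kernel_le_large:
  fixes c :: complex
  assumes weight: "\<And>l \<zeta>. 0 < l \<Longrightarrow> \<rho> \<le> cmod \<zeta> \<Longrightarrow>
      (\<integral>\<^sup>+u\<in>ball 0 \<rho> \<inter> ball \<zeta> l. ennreal ((\<rho>\<^sup>2 - (cmod u)\<^sup>2) powr s) \<partial>lborel)
        \<le> ennreal (C * \<rho> powr s * l powr (s + 2))"
    and s: "-1 < s" and \<beta>: "s + 2 < \<beta>" and \<rho>: "0 < \<rho>" "\<rho> \<le> 1"
    and c: "1 / 2 \<le> cmod c * \<rho>" "cmod c * \<rho> < 1" and C: "0 \<le> C"
  shows "(\<integral>\<^sup>+u\<in>ball 0 \<rho>. ennreal ((\<rho>\<^sup>2 - (cmod u)\<^sup>2) powr s / cmod (1 - c * u) powr \<beta>) \<partial>lborel)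
    \<le> ennreal (\<beta> * C * 4 powr (s + 2) / (\<beta> - s - 2) / (1 - cmod c * \<rho>) powr (\<beta> - s - 2))"
proof -
  define \<delta> where "\<delta> = 1 - cmod c * \<rho>"
  define W where "W u = ennreal ((\<rho>\<^sup>2 - (cmod u)\<^sup>2) powr s)" for u :: complex
  have "0 < \<delta>"
    using c by (simp add: \<delta>_def)
  have "(\<integral>\<^sup>+u\<in>ball 0 \<rho>. ennreal ((\<rho>\<^sup>2 - (cmod u)\<^sup>2) powr s / cmod (1 - c * u) powr \<beta>) \<partial>lborel)
      = (\<integral>\<^sup>+u\<in>ball 0 \<rho>. W u * ennreal (cmod (1 - c * u) powr - \<beta>) \<partial>lborel)"
    by (intro nn_integral_cong) (simp add: W_def ennreal_mult'[symmetric] powr_minus_divide)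
  also have "\<dots> = (\<integral>\<^sup>+\<tau>. ennreal (\<beta> * \<tau> powr (- \<beta> - 1)) *
      (\<integral>\<^sup>+u\<in>ball 0 \<rho> \<inter> {u. cmod (1 - c * u) \<le> \<tau>}. W u \<partial>lborel) \<partial>lborel)"
  proof -
    have "(\<lambda>u. cmod (1 - c * u)) \<in> borel_measurable lborel" "W \<in> borel_measurable lborel"
      unfolding W_def by measurable
    moreover have "0 < cmod (1 - c * u)" if "cmod u < \<rho>" for u
    proof -
      have "cmod c * cmod u < 1"
        using that c \<rho> mult_left_mono[of "cmod u" \<rho> "cmod c"] by simp
      moreover have "1 - cmod c * cmod u \<le> cmod (1 - c * u)"
        using norm_triangle_ineq2[of 1 "c * u"] by (simp add: norm_mult)
      ultimately show ?thesis
        by linarith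
    qed
    ultimately show ?thesis
      using nn_integral_layer_cake_powr_neg[OF lborel.sigma_finite_measure_axioms,
          of "ball 0 \<rho>" "\<lambda>u. cmod (1 - c * u)" W "- \<beta>"] s \<beta>
      by (simp del: norm_le_zero_iff zero_less_norm_iff)
  qed
  also have "\<dots> \<le> (\<integral>\<^sup>+\<tau>\<in>{\<delta>..}. ennreal (\<beta> * C * 4 powr (s + 2)) * ennreal (\<tau> powr (s + 1 - \<beta>)) \<partial>lborel)"
  proof (intro nn_integral_mono)
    fix \<tau> :: real
    have "ennreal (\<beta> * \<tau> powr (- \<beta> - 1)) * ennreal (C * 4 powr (s + 2) * \<tau> powr (s + 2)) =
        ennreal (\<beta> * C * 4 powr (s + 2)) * ennreal (\<tau> powr (s + 1 - \<beta>))"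
      using s \<beta> C by (simp add: ennreal_mult'[symmetric] powr_add[symmetric] mult_ac) (simp add: algebra_simps)
    then show "ennreal (\<beta> * \<tau> powr (- \<beta> - 1)) *
        (\<integral>\<^sup>+u\<in>ball 0 \<rho> \<inter> {u. cmod (1 - c * u) \<le> \<tau>}. W u \<partial>lborel) \<le>
      ennreal (\<beta> * C * 4 powr (s + 2)) * ennreal (\<tau> powr (s + 1 - \<beta>)) * indicator {\<delta>..} \<tau>"
      using mult_left_mono[OF nn_integral_disc_sublevel_le[OF weight s \<rho> c C, of \<tau>],
          of "ennreal (\<beta> * \<tau> powr (- \<beta> - 1))"]
      by (simp add: W_def \<delta>_def mult.assoc[symmetric])
  qed
  also have "\<dots> = ennreal (\<beta> * C * 4 powr (s + 2)) * ennreal (\<delta> powr (s + 2 - \<beta>) / (\<beta> - s - 2))"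
    using \<open>0 < \<delta>\<close> \<beta> by (simp add: mult.assoc nn_integral_cmult nn_integral_powr_Ici) (simp add: algebra_simps)
  also have "\<dots> = ennreal (\<beta> * C * 4 powr (s + 2) / (\<beta> - s - 2) / \<delta> powr (\<beta> - s - 2))"
    using s \<beta> C powr_minus_divide[of \<delta> "\<beta> - s - 2"]
    by (simp add: ennreal_mult[symmetric]) (simp add: algebra_simps)
  finally show ?thesis
    by (simp add: \<delta>_def)
qed

lemma nn_integral_disc_kernel_le:
  fixes s \<beta> :: real
  assumes s: "-1 < s" and \<beta>: "s + 2 < \<beta>"
  obtains K where "0 < K"
    "\<And>\<rho> c. 0 < \<rho> \<Longrightarrow> \<rho> \<le> 1 \<Longrightarrow> cmod c * \<rho> < 1 \<Longrightarrow>
      (\<integral>\<^sup>+u\<in>ball 0 \<rho>. ennreal ((\<rho>\<^sup>2 - (cmod u)\<^sup>2) powr s / cmod (1 - c * u) powr \<beta>) \<partial>lborel)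
        \<le> ennreal (K / (1 - (cmod c)\<^sup>2 * \<rho>\<^sup>2) powr (\<beta> - s - 2))"
proof -
  obtain C where C: "0 < C" and weight:
    "\<And>\<rho> l \<zeta>. 0 < \<rho> \<Longrightarrow> 0 < l \<Longrightarrow> \<rho> \<le> cmod \<zeta> \<Longrightarrow>
      (\<integral>\<^sup>+u\<in>ball 0 \<rho> \<inter> ball \<zeta> l. ennreal ((\<rho>\<^sup>2 - (cmod u)\<^sup>2) powr s) \<partial>lborel)
        \<le> ennreal (C * \<rho> powr s * l powr (s + 2))"
    using nn_integral_disc_weight_le[OF s] by blast
  define A where "A = 2 powr \<beta> * C * 2 powr (s + 2)"
  define B where "B = \<beta> * C * 4 powr (s + 2) / (\<beta> - s - 2)"
  have "0 < A" "0 < B"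
    using C s \<beta> by (simp_all add: A_def B_def)
  show ?thesis
  proof (rule that)
    show "0 < A + B * 2 powr (\<beta> - s - 2)"
      using \<open>0 < A\<close> \<open>0 < B\<close> by (intro add_pos_pos mult_pos_pos) auto
    fix \<rho> :: real and c :: complex
    assume \<rho>: "0 < \<rho>" "\<rho> \<le> 1" and c: "cmod c * \<rho> < 1"
    have "(cmod c)\<^sup>2 * \<rho>\<^sup>2 < 1"
      using c \<rho> by (simp add: power_mult_distrib[symmetric] power_less_one_iff abs_square_less_1)
    then have X: "0 < (1 - (cmod c)\<^sup>2 * \<rho>\<^sup>2) powr (\<beta> - s - 2)"
      "(1 - (cmod c)\<^sup>2 * \<rho>\<^sup>2) powr (\<beta> - s - 2) \<le> 1"
      using s \<beta> by (auto intro!: powr_le1)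
    consider "cmod c * \<rho> \<le> 1 / 2" | "1 / 2 \<le> cmod c * \<rho>"
      by linarith
    then show "(\<integral>\<^sup>+u\<in>ball 0 \<rho>. ennreal ((\<rho>\<^sup>2 - (cmod u)\<^sup>2) powr s / cmod (1 - c * u) powr \<beta>) \<partial>lborel)
        \<le> ennreal ((A + B * 2 powr (\<beta> - s - 2)) / (1 - (cmod c)\<^sup>2 * \<rho>\<^sup>2) powr (\<beta> - s - 2))"
    proof cases
      case 1
      have "A \<le> A / (1 - (cmod c)\<^sup>2 * \<rho>\<^sup>2) powr (\<beta> - s - 2)"
        using X \<open>0 < A\<close> by (simp add: le_divide_eq mult_le_cancel_left1)
      also have "\<dots> \<le> (A + B * 2 powr (\<beta> - s - 2)) / (1 - (cmod c)\<^sup>2 * \<rho>\<^sup>2) powr (\<beta> - s - 2)"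
        using X \<open>0 < B\<close> by (intro divide_right_mono) auto
      finally show ?thesis
        using nn_integral_disc_kernel_le_small[OF weight[OF \<rho>(1)] s _ \<rho> 1, of \<beta>] C s \<beta>
        by (auto simp: A_def elim!: order_trans intro!: ennreal_leI)
    next
      case 2
      have inv: "1 / (1 - cmod c * \<rho>) powr (\<beta> - s - 2) \<le> 2 powr (\<beta> - s - 2) / (1 - (cmod c * \<rho>)\<^sup>2) powr (\<beta> - s - 2)"
        using c 2 s \<beta> by (intro inverse_one_minus_powr_le) auto
      have "B / (1 - cmod c * \<rho>) powr (\<beta> - s - 2) \<le>
          B * 2 powr (\<beta> - s - 2) / (1 - (cmod c)\<^sup>2 * \<rho>\<^sup>2) powr (\<beta> - s - 2)"
        using mult_left_mono[OF inv, of B] \<open>0 < B\<close> by (simp add: power_mult_distrib)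
      also have "\<dots> \<le> (A + B * 2 powr (\<beta> - s - 2)) / (1 - (cmod c)\<^sup>2 * \<rho>\<^sup>2) powr (\<beta> - s - 2)"
        using X \<open>0 < A\<close> by (simp add: divide_right_mono)
      finally show ?thesis
        using nn_integral_disc_kernel_le_large[OF weight[OF \<rho>(1)] s \<beta> \<rho> 2 c] C
        by (auto simp: B_def elim!: order_trans intro!: ennreal_leI)
    qed
  qed
qed

lemma is_poly2_holomorphic:
  assumes "is_poly2 p"
  shows "p z holomorphic_on UNIV"
proof -
  obtain N c where "\<And>z w. p z w = (\<Sum>i\<le>N. \<Sum>j\<le>N. c i j * z ^ i * w ^ j)"
    using assms unfolding is_poly2_def by blast
  then have "p z = (\<lambda>w. \<Sum>i\<le>N. \<Sum>j\<le>N. c i j * z ^ i * w ^ j)"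
    by (intro ext)
  then show ?thesis
    by (simp add: holomorphic_intros)
qed

lemma factor_norm_bound_of_zero_free:
  fixes p :: "complex \<Rightarrow> complex \<Rightarrow> complex" and H :: "'i \<Rightarrow> complex"
  assumes poly: "is_poly2 p" and nozero: "\<forall>(z, w)\<in>ball2. p z w \<noteq> 0" and "0 < \<epsilon>"
    and I: "finite I" "j \<in> I"
    and factor: "\<And>w. w \<in> ball 1 \<epsilon> \<Longrightarrow> p z w = A * (\<Prod>i\<in>I. 1 - H i * w)"
  shows "(cmod (H j))\<^sup>2 * (1 - (cmod z)\<^sup>2) \<le> 1"
proof (cases "H j = 0")
  case False
  have "p z w = A * (\<Prod>i\<in>I. 1 - H i * w)" for w
  proof (rule analytic_continuation_open[of "ball 1 \<epsilon>" UNIV "p z"])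
    show "p z holomorphic_on UNIV"
      by (rule is_poly2_holomorphic[OF poly])
    show "(\<lambda>w. A * (\<Prod>i\<in>I. 1 - H i * w)) holomorphic_on UNIV"
      by (intro holomorphic_intros)
  qed (use \<open>0 < \<epsilon>\<close> factor in auto)
  moreover have "(\<Prod>i\<in>I. 1 - H i * (1 / H j)) = 0"
    by (rule prod_zero) (use I False in auto)
  ultimately have "p z (1 / H j) = 0"
    by simp
  then have "1 \<le> (cmod z)\<^sup>2 + (cmod (1 / H j))\<^sup>2"
    using nozero by (force simp: ball2_def)
  then have "1 - (cmod z)\<^sup>2 \<le> 1 / (cmod (H j))\<^sup>2"
    by (simp add: norm_divide power_one_over)
  then show ?thesis
    using False by (simp add: field_simps)
qed simp

lemma le_on_open_subset_closure:
  fixes f :: "'a :: metric_space \<Rightarrow> real"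
  assumes U: "open U" and f: "continuous_on U f" and dense: "U \<subseteq> closure D"
    and le: "\<And>y. y \<in> U \<inter> D \<Longrightarrow> f y \<le> c" and x: "x \<in> U"
  shows "f x \<le> c"
proof -
  obtain e where e: "0 < e" "cball x e \<subseteq> U"
    using U x open_contains_cball_eq by blast
  have "closure (ball x e \<inter> D) \<subseteq> cball x e"
    by (rule closure_minimal) auto
  then have "continuous_on (closure (ball x e \<inter> D)) f"
    using e by (intro continuous_on_subset[OF f]) blast
  moreover have "x \<in> closure (ball x e \<inter> D)"
    using open_Int_closure_subset[of "ball x e" D] dense x e by auto
  moreover have "f y \<le> c" if "y \<in> ball x e \<inter> D" for y
    using that e by (intro le) auto
  ultimately show ?thesis
    by (rule continuous_le_on_closure)
qed

lemma subset_closure_Int_INTER_open: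
  fixes \<Omega> :: "'i \<Rightarrow> 'a :: topological_space set"
  assumes P: "open P" and "finite I"
    and "\<And>i. i \<in> I \<Longrightarrow> open (\<Omega> i)" and "\<And>i. i \<in> I \<Longrightarrow> P \<subseteq> closure (\<Omega> i)"
  shows "P \<subseteq> closure (P \<inter> (\<Inter>i\<in>I. \<Omega> i))"
  using assms(2-)
proof (induction I rule: finite_induct)
  case empty
  then show ?case
    by (simp add: closure_subset)
next
  case (insert k I)
  define S where "S = P \<inter> (\<Inter>i\<in>I. \<Omega> i)"
  have "P \<subseteq> closure S"
    unfolding S_def using insert.prems by (intro insert.IH) auto
  have "open S"
    unfolding S_def using P insert by (intro open_Int open_INT) auto
  then have "S \<inter> closure (\<Omega> k) \<subseteq> closure (S \<inter> \<Omega> k)"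
    by (rule open_Int_closure_subset)
  moreover have "S \<subseteq> closure (\<Omega> k)"
    unfolding S_def using insert.prems by blast
  ultimately have "closure S \<subseteq> closure (S \<inter> \<Omega> k)"
    by (metis closure_closure closure_mono inf.absorb1)
  moreover have "S \<inter> \<Omega> k = P \<inter> (\<Inter>i\<in>insert k I. \<Omega> i)"
    unfolding S_def by blast
  ultimately show ?case
    using \<open>P \<subseteq> closure S\<close> by simp
qed

lemma branch_norm_bound:
  fixes p :: "complex \<Rightarrow> complex \<Rightarrow> complex" and h :: "'i \<Rightarrow> complex \<Rightarrow> complex"
  assumes poly: "is_poly2 p" and nozero: "\<forall>(z, w)\<in>ball2. p z w \<noteq> 0" and "0 < \<epsilon>"
    and I: "finite I" "j \<in> I" and P: "open P"
    and \<Omega>_open: "\<And>i. i \<in> I \<Longrightarrow> open (\<Omega> i)" and \<Omega>_sub: "\<And>i. i \<in> I \<Longrightarrow> \<Omega> i \<subseteq> P"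
    and \<Omega>_dense: "\<And>i. i \<in> I \<Longrightarrow> P \<subseteq> closure (\<Omega> i)"
    and h: "continuous_on (\<Omega> j) (h j)"
    and factor: "\<And>z w. z \<in> (\<Inter>i\<in>I. \<Omega> i) \<Longrightarrow> w \<in> ball 1 \<epsilon> \<Longrightarrow>
      p z w = a z * (\<Prod>i\<in>I. 1 - h i z * w)"
    and x: "x \<in> \<Omega> j"
  shows "(cmod (h j x))\<^sup>2 * (1 - (cmod x)\<^sup>2) \<le> 1"
proof (rule le_on_open_subset_closure[where D = "\<Inter>i\<in>I. \<Omega> i"])
  show "open (\<Omega> j)"
    using \<Omega>_open I by blast
  have "P \<subseteq> closure (P \<inter> (\<Inter>i\<in>I. \<Omega> i))"
    using P I(1) \<Omega>_open \<Omega>_dense by (rule subset_closure_Int_INTER_open)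
  then show "\<Omega> j \<subseteq> closure (\<Inter>i\<in>I. \<Omega> i)"
    using \<Omega>_sub[OF I(2)] closure_mono[of "P \<inter> (\<Inter>i\<in>I. \<Omega> i)" "\<Inter>i\<in>I. \<Omega> i"] by blast
  show "continuous_on (\<Omega> j) (\<lambda>y. (cmod (h j y))\<^sup>2 * (1 - (cmod y)\<^sup>2))"
    using h by (intro continuous_intros)
  show "(cmod (h j y))\<^sup>2 * (1 - (cmod y)\<^sup>2) \<le> 1" if "y \<in> \<Omega> j \<inter> (\<Inter>i\<in>I. \<Omega> i)" for y
    using that factor by (intro factor_norm_bound_of_zero_free[OF poly nozero \<open>0 < \<epsilon>\<close> I, of y "a y"]) blast
qed (rule x)

lemma nn_integral_ball2_slice_le:
  fixes z c :: complex and V :: "complex set" and s \<beta> b K :: real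
  assumes z: "cmod z < 1" and c: "(cmod c)\<^sup>2 * (1 - (cmod z)\<^sup>2) < 1" and K: "0 \<le> K"
    and fiber: "\<And>\<rho> c. 0 < \<rho> \<Longrightarrow> \<rho> \<le> 1 \<Longrightarrow> cmod c * \<rho> < 1 \<Longrightarrow>
      (\<integral>\<^sup>+u\<in>ball 0 \<rho>. ennreal ((\<rho>\<^sup>2 - (cmod u)\<^sup>2) powr s / cmod (1 - c * u) powr \<beta>) \<partial>lborel)
        \<le> ennreal (K / (1 - (cmod c)\<^sup>2 * \<rho>\<^sup>2) powr b)"
  shows "(\<integral>\<^sup>+w. indicator ball2 (z, w) * indicator V w *
      ennreal ((1 - (cmod z)\<^sup>2 - (cmod w)\<^sup>2) powr s / cmod (1 - c * w) powr \<beta>) \<partial>lborel)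
    \<le> ennreal (K / (1 - (cmod c)\<^sup>2 * (1 - (cmod z)\<^sup>2)) powr b)"
proof -
  define \<rho> where "\<rho> = sqrt (1 - (cmod z)\<^sup>2)"
  have \<rho>: "0 < \<rho>" "\<rho> \<le> 1" "\<rho>\<^sup>2 = 1 - (cmod z)\<^sup>2"
    using z by (auto simp: \<rho>_def abs_square_less_1 less_imp_le)
  have "(cmod c * \<rho>)\<^sup>2 < 1"
    using c \<rho> by (simp add: power_mult_distrib)
  then have "cmod c * \<rho> < 1"
    by (simp add: power_less_one_iff abs_square_less_1)
  have "(\<integral>\<^sup>+w. indicator ball2 (z, w) * indicator V w *
      ennreal ((1 - (cmod z)\<^sup>2 - (cmod w)\<^sup>2) powr s / cmod (1 - c * w) powr \<beta>) \<partial>lborel) \<le>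
      (\<integral>\<^sup>+w\<in>ball 0 \<rho>. ennreal ((\<rho>\<^sup>2 - (cmod w)\<^sup>2) powr s / cmod (1 - c * w) powr \<beta>) \<partial>lborel)"
    using \<rho> by (intro nn_integral_mono)
      (auto simp: ball2_def \<rho>_def real_less_rsqrt algebra_simps split: split_indicator)
  also have "\<dots> \<le> ennreal (K / (1 - (cmod c)\<^sup>2 * \<rho>\<^sup>2) powr b)"
    using \<rho>(1,2) \<open>cmod c * \<rho> < 1\<close> by (rule fiber)
  finally show ?thesis
    using \<rho> by simp
qed

lemma nn_integral_ball2_le_fiberwise:
  fixes g :: "complex \<Rightarrow> complex" and \<Omega> V :: "complex set" and s \<beta> b K :: real
  assumes \<Omega>: "open \<Omega>" and g: "continuous_on \<Omega> g" and V: "V \<in> sets borel" and K: "0 \<le> K"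
    and bound: "\<And>z. z \<in> \<Omega> \<Longrightarrow> cmod z < 1 \<Longrightarrow> (cmod (g z))\<^sup>2 * (1 - (cmod z)\<^sup>2) < 1"
    and fiber: "\<And>\<rho> c. 0 < \<rho> \<Longrightarrow> \<rho> \<le> 1 \<Longrightarrow> cmod c * \<rho> < 1 \<Longrightarrow>
      (\<integral>\<^sup>+u\<in>ball 0 \<rho>. ennreal ((\<rho>\<^sup>2 - (cmod u)\<^sup>2) powr s / cmod (1 - c * u) powr \<beta>) \<partial>lborel)
        \<le> ennreal (K / (1 - (cmod c)\<^sup>2 * \<rho>\<^sup>2) powr b)"
  shows "(\<integral>\<^sup>+zw\<in>ball2 \<inter> (\<Omega> \<times> V). ennreal ((1 - (cmod (fst zw))\<^sup>2 - (cmod (snd zw))\<^sup>2) powr s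
        / cmod (1 - g (fst zw) * snd zw) powr \<beta>) \<partial>lborel)
    \<le> ennreal K * (\<integral>\<^sup>+z\<in>\<Omega>. ennreal (1 / (1 - (cmod (g z))\<^sup>2 * (1 - (cmod z)\<^sup>2)) powr b) \<partial>lborel)"
proof -
  define G where "G z = indicator \<Omega> z *\<^sub>R g z" for z
  have "open ball2"
    unfolding ball2_def case_prod_unfold by (intro open_Collect_less continuous_intros)
  moreover have "sets (lborel \<Otimes>\<^sub>M lborel) = sets (borel :: (complex \<times> complex) measure)"
    by (simp only: lborel_prod sets_lborel)
  ultimately have [measurable]: "\<Omega> \<in> sets borel" "V \<in> sets borel" "ball2 \<in> sets (lborel \<Otimes>\<^sub>M lborel)"
    using \<Omega> V by auto
  have [measurable]: "G \<in> borel_measurable borel"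
    unfolding G_def by (rule borel_measurable_continuous_on_indicator) (use g in auto)
  have G: "G z = g z" if "z \<in> \<Omega>" for z
    using that by (simp add: G_def)
  define F where "F zw = indicator ball2 zw * indicator \<Omega> (fst zw) * indicator V (snd zw) *
    ennreal ((1 - (cmod (fst zw))\<^sup>2 - (cmod (snd zw))\<^sup>2) powr s / cmod (1 - G (fst zw) * snd zw) powr \<beta>)"
    for zw :: "complex \<times> complex"
  have F_meas: "F \<in> borel_measurable (lborel \<Otimes>\<^sub>M lborel)"
    unfolding F_def by measurable
  have fiber_F: "(\<integral>\<^sup>+w. F (z, w) \<partial>lborel) \<le>
      ennreal K * (ennreal (1 / (1 - (cmod (G z))\<^sup>2 * (1 - (cmod z)\<^sup>2)) powr b) * indicator \<Omega> z)" for z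
  proof (cases "z \<in> \<Omega> \<and> cmod z < 1")
    case True
    then have "(\<integral>\<^sup>+w. F (z, w) \<partial>lborel) = (\<integral>\<^sup>+w. indicator ball2 (z, w) * indicator V w *
        ennreal ((1 - (cmod z)\<^sup>2 - (cmod w)\<^sup>2) powr s / cmod (1 - G z * w) powr \<beta>) \<partial>lborel)"
      by (simp add: F_def)
    also have "\<dots> \<le> ennreal (K / (1 - (cmod (G z))\<^sup>2 * (1 - (cmod z)\<^sup>2)) powr b)"
      using True bound[of z] by (intro nn_integral_ball2_slice_le K fiber) (auto simp: G)
    finally show ?thesis
      using True K by (simp add: ennreal_mult[symmetric])
  next
    case False
    have "(z, w) \<notin> ball2" if "z \<in> \<Omega>" for w
    proof -
      have "1 \<le> (cmod z)\<^sup>2"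
        using False that one_le_power[of "cmod z" 2] by auto
      then show ?thesis
        by (simp add: ball2_def not_less add_increasing2)
    qed
    then have "F (z, w) = 0" for w
      by (auto simp: F_def split: split_indicator)
    then show ?thesis
      by simp
  qed
  have "(\<integral>\<^sup>+zw\<in>ball2 \<inter> (\<Omega> \<times> V). ennreal ((1 - (cmod (fst zw))\<^sup>2 - (cmod (snd zw))\<^sup>2) powr s
        / cmod (1 - g (fst zw) * snd zw) powr \<beta>) \<partial>lborel) = (\<integral>\<^sup>+zw. F zw \<partial>(lborel \<Otimes>\<^sub>M lborel))"
    by (auto simp: lborel_prod F_def G intro!: nn_integral_cong split: split_indicator)
  also have "\<dots> = (\<integral>\<^sup>+z. \<integral>\<^sup>+w. F (z, w) \<partial>lborel \<partial>lborel)"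
    by (rule lborel.nn_integral_fst[symmetric, OF F_meas])
  also have "\<dots> \<le> (\<integral>\<^sup>+z. ennreal K *
      (ennreal (1 / (1 - (cmod (G z))\<^sup>2 * (1 - (cmod z)\<^sup>2)) powr b) * indicator \<Omega> z) \<partial>lborel)"
    by (intro nn_integral_mono fiber_F)
  also have "\<dots> = ennreal K * (\<integral>\<^sup>+z\<in>\<Omega>. ennreal (1 / (1 - (cmod (G z))\<^sup>2 * (1 - (cmod z)\<^sup>2)) powr b) \<partial>lborel)"
    by (rule nn_integral_cmult) measurable
  also have "\<dots> = ennreal K * (\<integral>\<^sup>+z\<in>\<Omega>. ennreal (1 / (1 - (cmod (g z))\<^sup>2 * (1 - (cmod z)\<^sup>2)) powr b) \<partial>lborel)"
    by (intro arg_cong[where f = "(*) (ennreal K)"] nn_integral_cong) (simp add: G split: split_indicator)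
  finally show ?thesis .
qed

lemma norm_scaled_branch_less:
  fixes w z :: complex and r :: real
  assumes r: "0 < r" "r < 1" and le: "(cmod w)\<^sup>2 * (1 - (cmod (of_real r * z))\<^sup>2) \<le> 1"
  shows "(cmod (of_real r * w))\<^sup>2 * (1 - (cmod z)\<^sup>2) < 1"
proof (cases "w = 0")
  case False
  have "r\<^sup>2 * (1 - (cmod z)\<^sup>2) < 1 - r\<^sup>2 * (cmod z)\<^sup>2"
    using r by (simp add: algebra_simps power_less_one_iff)
  then have "(cmod w)\<^sup>2 * (r\<^sup>2 * (1 - (cmod z)\<^sup>2)) < (cmod w)\<^sup>2 * (1 - (cmod (of_real r * z))\<^sup>2)"
    using r False by (simp add: norm_mult power_mult_distrib)
  then show ?thesis
    using r le by (simp add: norm_mult power_mult_distrib mult_ac)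
qed simp

lemma nn_integral_ball2_scaled_branch_le:
  fixes h :: "complex \<Rightarrow> complex" and \<Omega> V :: "complex set" and r s \<beta> b K :: real
  assumes \<Omega>: "open \<Omega>" and h: "continuous_on \<Omega> h" and V: "V \<in> sets borel" and K: "0 \<le> K"
    and r: "0 < r" "r < 1" and scale: "\<And>z. z \<in> \<Omega> \<Longrightarrow> of_real r * z \<in> \<Omega>"
    and branch: "\<And>x. x \<in> \<Omega> \<Longrightarrow> (cmod (h x))\<^sup>2 * (1 - (cmod x)\<^sup>2) \<le> 1"
    and fiber: "\<And>\<rho> c. 0 < \<rho> \<Longrightarrow> \<rho> \<le> 1 \<Longrightarrow> cmod c * \<rho> < 1 \<Longrightarrow>
      (\<integral>\<^sup>+u\<in>ball 0 \<rho>. ennreal ((\<rho>\<^sup>2 - (cmod u)\<^sup>2) powr s / cmod (1 - c * u) powr \<beta>) \<partial>lborel)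
        \<le> ennreal (K / (1 - (cmod c)\<^sup>2 * \<rho>\<^sup>2) powr b)"
  shows "(\<integral>\<^sup>+zw\<in>ball2 \<inter> (\<Omega> \<times> V). ennreal ((1 - (cmod (fst zw))\<^sup>2 - (cmod (snd zw))\<^sup>2) powr s
        / cmod (1 - of_real r * h (of_real r * fst zw) * snd zw) powr \<beta>) \<partial>lborel)
    \<le> ennreal K * (\<integral>\<^sup>+z\<in>\<Omega>. ennreal (1 / (1 - r\<^sup>2 * (cmod (h (of_real r * z)))\<^sup>2 * (1 - (cmod z)\<^sup>2)) powr b) \<partial>lborel)"
proof -
  have cont: "continuous_on \<Omega> (\<lambda>z. of_real r * h (of_real r * z))"
    using scale by (intro continuous_intros continuous_on_compose2[OF h]) auto
  have strict: "(cmod (of_real r * h (of_real r * z)))\<^sup>2 * (1 - (cmod z)\<^sup>2) < 1"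
    if "z \<in> \<Omega>" "cmod z < 1" for z
    using that by (intro norm_scaled_branch_less r branch scale)
  from nn_integral_ball2_le_fiberwise[OF \<Omega> cont V K strict fiber] show ?thesis
    using r by (simp add: norm_mult power_mult_distrib)
qed

theorem mainTheorem9:
  fixes p :: "complex \<Rightarrow> complex \<Rightarrow> complex"
    and a :: "complex \<Rightarrow> complex"
    and h :: "nat \<Rightarrow> complex \<Rightarrow> complex"
    and \<Omega> :: "nat \<Rightarrow> complex set"
    and n :: nat and \<epsilon> s \<beta> b :: real and j :: nat
  assumes poly: "is_poly2 p"
    and nozero: "\<forall>(z, w)\<in>ball2. p z w \<noteq> 0"
    and p01: "p 0 1 = 0"
    and eps: "\<epsilon> > 0"
    and a_hol: "a holomorphic_on ball 0 \<epsilon>"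
    and a_nz: "\<forall>z\<in>ball 0 \<epsilon>. a z \<noteq> 0"
    and \<Omega>_open: "\<forall>i\<in>{1..n}. open (\<Omega> i)"
    and \<Omega>_sub: "\<forall>i\<in>{1..n}. \<Omega> i \<subseteq> ball 0 \<epsilon> - {0}"
    and \<Omega>_dense: "\<forall>i\<in>{1..n}. ball 0 \<epsilon> - {0} \<subseteq> closure (\<Omega> i)"
    and \<Omega>_sc: "\<forall>i\<in>{1..n}. simply_connected (\<Omega> i)"
    and \<Omega>_scale: "\<forall>i\<in>{1..n}. \<forall>z\<in>\<Omega> i. \<forall>r::real. 0 < r \<and> r < 1 \<longrightarrow> of_real r * z \<in> \<Omega> i"
    and h_hol: "\<forall>i\<in>{1..n}. h i holomorphic_on \<Omega> i"
    and h_puiseux: "\<forall>i\<in>{1..n}. puiseux_on (\<Omega> i) (h i)"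
    and factor: "\<forall>z\<in>(\<Inter>i\<in>{1..n}. \<Omega> i). \<forall>w\<in>ball 1 \<epsilon>.
                   p z w = a z * (\<Prod>i=1..n. 1 - h i z * w)"
    and s_gt: "s > -1"
    and b_def: "b = \<beta> - s - 2"
    and b_pos: "b > 0"
    and j_range: "j \<in> {1..n}"
  shows "\<exists>C::real. C > 0 \<and> (\<forall>r::real. 0 < r \<and> r < 1 \<longrightarrow>
     (\<integral>\<^sup>+ zw \<in> ball2 \<inter> (\<Omega> j \<times> ball 1 \<epsilon>).
        ennreal ((1 - (cmod (fst zw))\<^sup>2 - (cmod (snd zw))\<^sup>2) powr s
                 / (cmod (1 - of_real r * h j (of_real r * fst zw) * snd zw)) powr \<beta>) \<partial>lborel)
     \<le> ennreal C * (\<integral>\<^sup>+ z \<in> \<Omega> j.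
        ennreal (1 / (1 - r\<^sup>2 * (cmod (h j (of_real r * z)))\<^sup>2 * (1 - (cmod z)\<^sup>2)) powr b) \<partial>lborel))"
proof -
  obtain K where "0 < K" and fiber:
    "\<And>\<rho> c. 0 < \<rho> \<Longrightarrow> \<rho> \<le> 1 \<Longrightarrow> cmod c * \<rho> < 1 \<Longrightarrow>
      (\<integral>\<^sup>+u\<in>ball 0 \<rho>. ennreal ((\<rho>\<^sup>2 - (cmod u)\<^sup>2) powr s / cmod (1 - c * u) powr \<beta>) \<partial>lborel)
        \<le> ennreal (K / (1 - (cmod c)\<^sup>2 * \<rho>\<^sup>2) powr b)"
    using nn_integral_disc_kernel_le[OF s_gt, of \<beta>] b_def b_pos by auto
  have h_cont: "continuous_on (\<Omega> j) (h j)"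
    using h_hol j_range by (simp add: holomorphic_on_imp_continuous_on)
  have branch: "(cmod (h j x))\<^sup>2 * (1 - (cmod x)\<^sup>2) \<le> 1" if "x \<in> \<Omega> j" for x
    by (rule branch_norm_bound[OF poly nozero eps finite_atLeastAtMost j_range, where P = "ball 0 \<epsilon> - {0}"])
      (use \<Omega>_open \<Omega>_sub \<Omega>_dense h_cont factor that in auto)
  show ?thesis
    using \<open>0 < K\<close> \<Omega>_open \<Omega>_scale j_range h_cont branch
    by (intro exI[of _ K] conjI allI impI nn_integral_ball2_scaled_branch_le fiber) auto
qed

end
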